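(* Let $k\colon K\to T1$ be an $n$-globular operad equipped with a contraction and a system of compositions. Then $k$ has a section $\hat k\colon T1\to K$ in $\mathbf{GSet}_n$ (i.e. $k\circ\hat k=\mathrm{id}_{T1}$); in particular $k_m\colon K_m\to(T1)_m$ is surjective for every $0\le m\le n$.
   Context: Fix $n\in\mathbb{N}$. An $n$-globular set $X$ consists of sets $X_0,\dots,X_n$ and functions $s,t\colon X_m\to X_{m-1}$ ($1\le m\le n$) with $s\circ s=s\circ t$ and $t\circ s=t\circ t$; maps commute with $s,t$; $\mathbf{GSet}_n$ is the resulting category. Two $m$-cells are parallel if they have the same source and target. $T$ denotes the free strict $n$-category monad on $\mathbf{GSet}_n$, with unit $\eta^T$ and multiplication $\mu^T$. $1$ denotes the terminal $n$-globular set and $!$ any map to $1$; $T1$ is the free strict $n$-category on $1$; $\mathrm{id}_\alpha$ is the identity cell on $\alpha$. An $n$-globular collection is a map $k\colon K\to T1$ in $\mathbf{GSet}_n$; a map of collections is a map over $T1$. The tensor $K\otimes K'$ of collections $k\colon K\to T1$, $k'\colon K'\to T1$ is the pullback of $k$ along $T!\colon TK'\to T1$, regarded as a collection via $K\otimes K'\to TK'\xrightarrow{Tk'}T^21\xrightarrow{\mu^T_1}T1$; the unit is $\eta^T_1\colon1\to T1$. An $n$-globular operad is a monoid $(K,\eta^K,\mu^K)$ in this monoidal category of collections. Contractions: for a collection $k\colon K\to T1$ and $x\in(T1)_m$ put $K(x)=\{a\in K_m: k(a)=x\}$. For $1\le m\le n$ and $\pi\in(T1)_m$ let $C_K(\pi)=K(s\pi)\times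 K(t\pi)$ if $m=1$, and $C_K(\pi)=\{(a,b)\in K(s\pi)\times K(t\pi): s(a)=s(b),\ t(a)=t(b)\}$ if $m>1$. A contraction $\gamma$ on $K$ consists of, for each $1\le m\le n$ and each $\alpha\in(T1)_{m-1}$, a function $\gamma_{\mathrm{id}_\alpha}\colon C_K(\mathrm{id}_\alpha)\to K(\mathrm{id}_\alpha)$ with $s\gamma_{\mathrm{id}_\alpha}(a,b)=a$ and $t\gamma_{\mathrm{id}_\alpha}(a,b)=b$, such that moreover (tameness) any two parallel $n$-cells $a,b$ of $K$ with $k(a)=k(b)$ are equal. Systems of compositions: for $0\le m\le n$ let $\eta_m\in(T1)_m$ be the image under $\eta^T_1$ of the unique $m$-cell of $1$; put $\beta^m_m=\eta_m$ and $\beta^m_p=\eta_m\circ^m_p\eta_m$ for $0\le p<m$. Let $S\subseteq T1$ be the sub-$n$-globular set with $S_m=\{\beta^m_p:0\le p\le m\}$, a collection via the inclusion, with $\eta^S\colon1\to S$ picking out each $\beta^m_m$. A system of compositions on an operad $K$ is a map of collections $\sigma\colon S\to K$ with $\sigma\circ\eta^S=\eta^K$. *)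

theory Defs
  imports Main "HOL-Library.FuncSet"
begin

section \<open>n-globular sets (all cells of one carrier type; cells indexed by dimension)\<close>

record 'a gset =
  gcells :: "nat \<Rightarrow> 'a set"
  gsrc   :: "nat \<Rightarrow> 'a \<Rightarrow> 'a"   \<comment> \<open>gsrc X m : X_m -> X_(m-1)\<close>
  gtgt   :: "nat \<Rightarrow> 'a \<Rightarrow> 'a"

definition is_gset :: "nat \<Rightarrow> 'a gset \<Rightarrow> bool" where
  "is_gset n X \<longleftrightarrow>
     (\<forall>m>n. gcells X m = {}) \<and>
     (\<forall>m. 1 \<le> m \<and> m \<le> n \<longrightarrow> (\<forall>x\<in>gcells X m.
          gsrc X m x \<in> gcells X (m-1) \<and> gtgt X m x \<in> gcells X (m-1))) \<and>
     (\<forall>m. 2 \<le> m \<and> m \<le> n \<longrightarrow> (\<forall>x\<in>gcells X m.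
          gsrc X (m-1) (gsrc X m x) = gsrc X (m-1) (gtgt X m x) \<and>
          gtgt X (m-1) (gsrc X m x) = gtgt X (m-1) (gtgt X m x)))"

text \<open>Maps of n-globular sets; they are only ever compared on cells.\<close>
definition gmap :: "nat \<Rightarrow> 'a gset \<Rightarrow> 'b gset \<Rightarrow> (nat \<Rightarrow> 'a \<Rightarrow> 'b) \<Rightarrow> bool" where
  "gmap n X Y f \<longleftrightarrow>
     (\<forall>m\<le>n. \<forall>x\<in>gcells X m. f m x \<in> gcells Y m) \<and>
     (\<forall>m. 1 \<le> m \<and> m \<le> n \<longrightarrow> (\<forall>x\<in>gcells X m.
          f (m-1) (gsrc X m x) = gsrc Y m (f m x) \<and>
          f (m-1) (gtgt X m x) = gtgt Y m (f m x)))"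

definition one :: "nat \<Rightarrow> unit gset" where
  "one n = \<lparr>gcells = (\<lambda>m. if m \<le> n then {()} else {}), gsrc = (\<lambda>_ _. ()), gtgt = (\<lambda>_ _. ())\<rparr>"

section \<open>Pasting diagrams (trees) and their globular sets of positions\<close>

datatype ptree = PT "ptree list"

fun kids :: "ptree \<Rightarrow> ptree list" where
  "kids (PT ts) = ts"

text \<open>hle m t: t has height at most m, i.e. t is an m-cell of T1.\<close>
fun hle :: "nat \<Rightarrow> ptree \<Rightarrow> bool" where
  "hle 0 (PT ts) = (ts = [])"
| "hle (Suc m) (PT ts) = (\<forall>t\<in>set ts. hle m t)"

text \<open>Truncation = source = target in T1.\<close>
fun trunc :: "nat \<Rightarrow> ptree \<Rightarrow> ptree" where
  "trunc 0 t = PT []"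
| "trunc (Suc k) (PT ts) = PT (map (trunc k) ts)"

fun subt :: "ptree \<Rightarrow> nat list \<Rightarrow> ptree" where
  "subt t [] = t"
| "subt (PT ts) (i # p) = subt (ts ! i) p"

text \<open>k-dimensional cells of the globular set of a pasting diagram, as lists of
  length k+1: for PT ts, the 0-cells are [j] (j \<le> length ts), and the (k+1)-cells
  are i # c with c a k-cell of the i-th subtree.\<close>
fun pos :: "ptree \<Rightarrow> nat \<Rightarrow> nat list set" where
  "pos (PT ts) 0 = {[j] | j. j \<le> length ts}"
| "pos (PT ts) (Suc k) = {i # c | i c. i < length ts \<and> c \<in> pos (ts ! i) k}"

definition allpos :: "ptree \<Rightarrow> nat list set" where
  "allpos t = (\<Union>k. pos t k)"

fun psrc :: "nat list \<Rightarrow> nat list" where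
  "psrc [] = []"
| "psrc [i] = []"
| "psrc [i, j] = [i]"
| "psrc (i # j # k # c) = i # psrc (j # k # c)"

fun ptgt :: "nat list \<Rightarrow> nat list" where
  "ptgt [] = []"
| "ptgt [i] = []"
| "ptgt [i, j] = [Suc i]"
| "ptgt (i # j # k # c) = i # ptgt (j # k # c)"

section \<open>The free strict n-category monad T\<close>

type_synonym 'a tcell = "ptree \<times> (nat list \<Rightarrow> 'a)"
type_synonym t1cell = "unit tcell"

text \<open>A labelling of a pasting diagram by X, i.e. a map of globular sets from it to X.\<close>
definition labels :: "'a gset \<Rightarrow> ptree \<Rightarrow> (nat list \<Rightarrow> 'a) \<Rightarrow> bool" where
  "labels X t f \<longleftrightarrow>
     (\<forall>k. \<forall>c\<in>pos t k. f c \<in> gcells X k) \<and>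
     (\<forall>k. \<forall>c\<in>pos t (Suc k). gsrc X (Suc k) (f c) = f (psrc c) \<and> gtgt X (Suc k) (f c) = f (ptgt c)) \<and>
     f \<in> extensional (allpos t)"

text \<open>T X: m-cells are pasting diagrams of dimension \<le> m labelled in X
  (cells of dimension < m among them are identities).\<close>
definition Tg :: "nat \<Rightarrow> 'a gset \<Rightarrow> 'a tcell gset" where
  "Tg n X = \<lparr>gcells = (\<lambda>m. if m \<le> n then {(t, f). hle m t \<and> labels X t f} else {}),
     gsrc = (\<lambda>m (t, f). (trunc (m-1) t, restrict f (allpos (trunc (m-1) t)))),
     gtgt = (\<lambda>m (t, f). (trunc (m-1) t,
        restrict (\<lambda>c. if length c = m then f (butlast c @ [length (kids (subt t (butlast c)))]) else f c)
                 (allpos (trunc (m-1) t))))\<rparr>"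

definition T1 :: "nat \<Rightarrow> t1cell gset" where
  "T1 n = Tg n (one n)"

definition Tmap :: "(nat \<Rightarrow> 'a \<Rightarrow> 'b) \<Rightarrow> nat \<Rightarrow> 'a tcell \<Rightarrow> 'b tcell" where
  "Tmap g m = (\<lambda>(t, f). (t, restrict (\<lambda>c. g (length c - 1) (f c)) (allpos t)))"

definition Tbang :: "nat \<Rightarrow> 'a tcell \<Rightarrow> t1cell" where
  "Tbang = Tmap (\<lambda>_ _. ())"

fun globe :: "nat \<Rightarrow> ptree" where
  "globe 0 = PT []"
| "globe (Suc m) = PT [globe m]"

fun isrc :: "'a gset \<Rightarrow> nat \<Rightarrow> nat \<Rightarrow> 'a \<Rightarrow> 'a" where
  "isrc X m 0 x = x"
| "isrc X m (Suc j) x = gsrc X (m - j) (isrc X m j x)"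

fun itgt :: "'a gset \<Rightarrow> nat \<Rightarrow> nat \<Rightarrow> 'a \<Rightarrow> 'a" where
  "itgt X m 0 x = x"
| "itgt X m (Suc j) x = gtgt X (m - j) (itgt X m j x)"

definition etaT :: "'a gset \<Rightarrow> nat \<Rightarrow> 'a \<Rightarrow> 'a tcell" where
  "etaT X m x = (globe m, restrict (\<lambda>c. if last c = 0 then isrc X m (m - (length c - 1)) x
                                          else itgt X m (m - (length c - 1)) x) (allpos (globe m)))"

text \<open>Composition \<circ>_p in the free strict n-category (diagrammatic order: first, then second).\<close>
fun tcomp :: "nat \<Rightarrow> ptree \<Rightarrow> ptree \<Rightarrow> ptree" where
  "tcomp 0 (PT us) (PT vs) = PT (us @ vs)"
| "tcomp (Suc p) (PT us) (PT vs) = PT (map2 (tcomp p) us vs)"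

fun lcomp :: "nat \<Rightarrow> ptree \<Rightarrow> ptree \<Rightarrow> (nat list \<Rightarrow> 'a) \<Rightarrow> (nat list \<Rightarrow> 'a) \<Rightarrow> nat list \<Rightarrow> 'a" where
  "lcomp p t u f g [] = undefined"
| "lcomp 0 (PT us) u f g [j] = (if j \<le> length us then f [j] else g [j - length us])"
| "lcomp 0 (PT us) u f g (i # j # c) =
     (if i < length us then f (i # j # c) else g ((i - length us) # j # c))"
| "lcomp (Suc p) t u f g [j] = f [j]"
| "lcomp (Suc p) (PT us) (PT vs) f g (i # j # c) =
     lcomp p (us ! i) (vs ! i) (\<lambda>c. f (i # c)) (\<lambda>c. g (i # c)) (j # c)"

definition tcompose :: "nat \<Rightarrow> 'a tcell \<Rightarrow> 'a tcell \<Rightarrow> 'a tcell" where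
  "tcompose p x y = (case (x, y) of ((t, f), (u, g)) \<Rightarrow>
      (tcomp p t u, restrict (lcomp p t u f g) (allpos (tcomp p t u))))"

fun comps :: "nat \<Rightarrow> 'a tcell list \<Rightarrow> 'a tcell" where
  "comps p [] = undefined"
| "comps p [x] = x"
| "comps p (x # y # zs) = tcompose p x (comps p (y # zs))"

text \<open>Composite of a pasting diagram of cells of TX (labels of a d-shifted diagram).\<close>
function mu :: "nat \<Rightarrow> ptree \<Rightarrow> (nat list \<Rightarrow> 'a tcell) \<Rightarrow> 'a tcell" where
  "mu d (PT ts) G =
     (if ts = [] then G [0]
      else comps d (map (\<lambda>(i, t). mu (Suc d) t (\<lambda>c. G (i # c))) (zip [0..<length ts] ts)))"
  by pat_completeness auto
termination
  apply (relation "measure (\<lambda>(d, t, G). size t)")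
   apply simp
  apply (auto dest!: set_zip_rightD)
  apply (metis less_Suc_eq_le order_refl size_list_estimation')
  done

definition muT :: "'a tcell tcell \<Rightarrow> 'a tcell" where
  "muT x = (case x of (t, G) \<Rightarrow> mu 0 t G)"

section \<open>Collections, tensor, operads\<close>

text \<open>K \<otimes> K' for collections k : K \<rightarrow> T1, k' : K' \<rightarrow> T1: the pullback of k along T!.
  Its structure map is (a, b) \<mapsto> muT (T k' b).\<close>
definition tensor :: "nat \<Rightarrow> 'a gset \<Rightarrow> (nat \<Rightarrow> 'a \<Rightarrow> t1cell) \<Rightarrow> 'b gset \<Rightarrow> ('a \<times> 'b tcell) gset" where
  "tensor n K k K' = \<lparr>gcells = (\<lambda>m. {(a, b). a \<in> gcells K m \<and> b \<in> gcells (Tg n K') m \<and> k m a = Tbang m b}),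
     gsrc = (\<lambda>m (a, b). (gsrc K m a, gsrc (Tg n K') m b)),
     gtgt = (\<lambda>m (a, b). (gtgt K m a, gtgt (Tg n K') m b))\<rparr>"

definition tensor_coll :: "(nat \<Rightarrow> 'b \<Rightarrow> t1cell) \<Rightarrow> nat \<Rightarrow> 'a \<times> 'b tcell \<Rightarrow> t1cell" where
  "tensor_coll k' m x = muT (Tmap k' m (snd x))"

definition operad ::
  "nat \<Rightarrow> 'a gset \<Rightarrow> (nat \<Rightarrow> 'a \<Rightarrow> t1cell) \<Rightarrow> (nat \<Rightarrow> unit \<Rightarrow> 'a) \<Rightarrow> (nat \<Rightarrow> 'a \<times> 'a tcell \<Rightarrow> 'a) \<Rightarrow> bool" where
  "operad n K k eK mK \<longleftrightarrow>
     is_gset n K \<and> gmap n K (T1 n) k \<and>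
     \<comment> \<open>unit: a map of collections I = (1, eta_1) \<rightarrow> K\<close>
     gmap n (one n) K eK \<and> (\<forall>m\<le>n. k m (eK m ()) = etaT (one n) m ()) \<and>
     \<comment> \<open>multiplication: a map of collections K \<otimes> K \<rightarrow> K\<close>
     gmap n (tensor n K k K) K mK \<and>
     (\<forall>m\<le>n. \<forall>x\<in>gcells (tensor n K k K) m. k m (mK m x) = tensor_coll k m x) \<and>
     \<comment> \<open>left unit law (I \<otimes> K \<cong> K, (*, eta_K a) \<mapsto> a)\<close>
     (\<forall>m\<le>n. \<forall>a\<in>gcells K m. mK m (eK m (), etaT K m a) = a) \<and>
     \<comment> \<open>right unit law (K \<otimes> I \<cong> K, (a, k a) \<mapsto> a)\<close>
     (\<forall>m\<le>n. \<forall>a\<in>gcells K m. mK m (a, Tmap eK m (k m a)) = a) \<and>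
     \<comment> \<open>associativity, via the canonical iso K\<otimes>(K\<otimes>K) \<rightarrow> (K\<otimes>K)\<otimes>K,
        (a, B) \<mapsto> ((a, T fst B), mu_K (T snd B))\<close>
     (\<forall>m\<le>n. \<forall>x\<in>gcells (tensor n K k (tensor n K k K)) m.
        mK m (mK m (fst x, Tmap (\<lambda>_. fst) m (snd x)), muT (Tmap (\<lambda>_. snd) m (snd x)))
        = mK m (fst x, Tmap mK m (snd x)))"

section \<open>Contractions\<close>

definition fib :: "'a gset \<Rightarrow> (nat \<Rightarrow> 'a \<Rightarrow> t1cell) \<Rightarrow> nat \<Rightarrow> t1cell \<Rightarrow> 'a set" where
  "fib K k m x = {a \<in> gcells K m. k m a = x}"

definition Cset :: "nat \<Rightarrow> 'a gset \<Rightarrow> (nat \<Rightarrow> 'a \<Rightarrow> t1cell) \<Rightarrow> nat \<Rightarrow> t1cell \<Rightarrow> ('a \<times> 'a) set" where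
  "Cset n K k m p =
     (if m = 1 then fib K k 0 (gsrc (T1 n) 1 p) \<times> fib K k 0 (gtgt (T1 n) 1 p)
      else {(a, b). a \<in> fib K k (m-1) (gsrc (T1 n) m p) \<and> b \<in> fib K k (m-1) (gtgt (T1 n) m p) \<and>
                    gsrc K (m-1) a = gsrc K (m-1) b \<and> gtgt K (m-1) a = gtgt K (m-1) b})"

text \<open>Identity cell id_alpha in T1: in this representation an (m-1)-cell (a labelled pasting
  diagram of dimension \<le> m-1) regarded as an m-cell is its own identity.\<close>
definition tid :: "t1cell \<Rightarrow> t1cell" where
  "tid a = a"

definition parallel :: "'a gset \<Rightarrow> nat \<Rightarrow> 'a \<Rightarrow> 'a \<Rightarrow> bool" where
  "parallel X m a b \<longleftrightarrow> (m = 0 \<or> (gsrc X m a = gsrc X m b \<and> gtgt X m a = gtgt X m b))"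

definition contraction ::
  "nat \<Rightarrow> 'a gset \<Rightarrow> (nat \<Rightarrow> 'a \<Rightarrow> t1cell) \<Rightarrow> (nat \<Rightarrow> t1cell \<Rightarrow> 'a \<times> 'a \<Rightarrow> 'a) \<Rightarrow> bool" where
  "contraction n K k gam \<longleftrightarrow>
     (\<forall>m. 1 \<le> m \<and> m \<le> n \<longrightarrow> (\<forall>\<alpha>\<in>gcells (T1 n) (m-1). \<forall>ab\<in>Cset n K k m (tid \<alpha>).
         gam m \<alpha> ab \<in> fib K k m (tid \<alpha>) \<and>
         gsrc K m (gam m \<alpha> ab) = fst ab \<and> gtgt K m (gam m \<alpha> ab) = snd ab)) \<and>
     (\<forall>a\<in>gcells K n. \<forall>b\<in>gcells K n. parallel K n a b \<and> k n a = k n b \<longrightarrow> a = b)"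

section \<open>Systems of compositions\<close>

definition beta :: "nat \<Rightarrow> nat \<Rightarrow> nat \<Rightarrow> t1cell" where
  "beta n m p = (if p = m then etaT (one n) m ()
                 else tcompose p (etaT (one n) m ()) (etaT (one n) m ()))"

definition Sg :: "nat \<Rightarrow> t1cell gset" where
  "Sg n = \<lparr>gcells = (\<lambda>m. if m \<le> n then {beta n m p | p. p \<le> m} else {}),
           gsrc = gsrc (T1 n), gtgt = gtgt (T1 n)\<rparr>"

definition comp_system ::
  "nat \<Rightarrow> 'a gset \<Rightarrow> (nat \<Rightarrow> 'a \<Rightarrow> t1cell) \<Rightarrow> (nat \<Rightarrow> unit \<Rightarrow> 'a) \<Rightarrow> (nat \<Rightarrow> t1cell \<Rightarrow> 'a) \<Rightarrow> bool" where
  "comp_system n K k eK sig \<longleftrightarrow>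
     gmap n (Sg n) K sig \<and>
     (\<forall>m\<le>n. \<forall>x\<in>gcells (Sg n) m. k m (sig m x) = x) \<and>
     (\<forall>m\<le>n. sig m (beta n m m) = eK m ())"

end

theory Submission
  imports Defs
begin

(* An m-cell of T1 is a pasting diagram: a tree of height at most m.  We show
   that every such tree x is the shape k(c) of some m-cell c of K, by induction on the size of x.
   Every tree is a d-fold suspension of a tree with either no branches (then x is a globe, hit by
   a degenerate cell obtained from the unit of K by repeated contraction) or with at least two
   branches (then x is a binary composite x1 o_d x2 of strictly smaller trees).  In the second
   case we compose preimages a1, a2 of x1, x2 in K by feeding the operad multiplication with the
   composition operation sigma(beta^m_d) and a labelling of its pasting diagram by a1 and a2.
   For this the d-boundaries of a1 and a2 must agree; the contraction provides, for any cell c,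
   a cell of the same shape with arbitrarily prescribed (parallel, correctly shaped) boundary,
   by composing c with contraction cells.  The section of k is finally built by recursion on the
   dimension: each m-cell of T1 is sent to a preimage whose boundary is the section of its
   boundary. *)

section \<open>Trees\<close>

fun susp :: "nat \<Rightarrow> ptree \<Rightarrow> ptree" where
  "susp 0 t = t"
| "susp (Suc d) t = PT [susp d t]"

lemma globe_susp: "globe d = susp d (PT [])"
  by (induction d) auto

lemma tcomp_susp: "tcomp d (susp d (PT us)) (susp d (PT vs)) = susp d (PT (us @ vs))"
  by (induction d) auto

lemma susp_decomp: "\<exists>d ts. x = susp d (PT ts) \<and> length ts \<noteq> 1"
proof (induction x)
  case (PT ts)
  show ?case
  proof (cases "length ts = 1")
    case True
    then obtain t where ts: "ts = [t]" by (cases ts) auto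
    with PT obtain d us where "t = susp d (PT us)" "length us \<noteq> 1" by auto
    then have "PT ts = susp (Suc d) (PT us) \<and> length us \<noteq> 1" using ts by simp
    then show ?thesis by blast
  next
    case False
    then show ?thesis by (metis susp.simps(1))
  qed
qed

text \<open>Splitting off the first branch of a suspended tree with at least two branches
  produces two strictly smaller trees; this drives the induction on trees.\<close>
lemma size_susp_split:
  "size (susp d (PT [t])) < size (susp d (PT (t # u # us)))"
  "size (susp d (PT (u # us))) < size (susp d (PT (t # u # us)))"
  by (induction d) auto

lemma hle_susp: "hle m (susp d t) \<longleftrightarrow> d \<le> m \<and> hle (m - d) t"
proof (induction d arbitrary: m)
  case 0 then show ?case by simp
next
  case (Suc d) then show ?case by (cases m) auto
qed

lemma hle_globe: "hle j (globe j)"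
  by (induction j) auto

lemma trunc_hle: "hle m x \<Longrightarrow> trunc m x = x"
proof (induction m arbitrary: x)
  case 0 then show ?case by (cases x) auto
next
  case (Suc m) then show ?case by (cases x) (auto intro: map_idI)
qed

lemma hle_trunc: "hle j (trunc j x)"
proof (induction j arbitrary: x)
  case 0 then show ?case by simp
next
  case (Suc j) then show ?case by (cases x) auto
qed

lemma trunc_trunc: "trunc j (trunc j' x) = trunc (min j j') x"
proof (induction j arbitrary: j' x)
  case 0 then show ?case by simp
next
  case (Suc j) then show ?case by (cases j'; cases x) auto
qed

lemma trunc_susp: "d \<le> j \<Longrightarrow> trunc j (susp d t) = susp d (trunc (j - d) t)"
proof (induction d arbitrary: j)
  case 0 then show ?case by simp
next
  case (Suc d) then show ?case by (cases j) auto
qed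

lemma trunc_globe: "trunc j (globe i) = globe (min i j)"
proof (induction i arbitrary: j)
  case 0 then show ?case by (cases j) auto
next
  case (Suc i) then show ?case by (cases j) auto
qed

lemma tcomp_trunc_left: "tcomp j (trunc j x) x = x"
proof (induction j arbitrary: x)
  case 0 then show ?case by (cases x) auto
next
  case (Suc j)
  obtain ts where x: "x = PT ts" by (cases x)
  have "map2 (tcomp j) (map (trunc j) ts) ts = ts"
    by (induction ts) (auto simp: Suc)
  then show ?case by (simp add: x)
qed

lemma tcomp_trunc_right: "tcomp j x (trunc j x) = x"
proof (induction j arbitrary: x)
  case 0 then show ?case by (cases x) auto
next
  case (Suc j)
  obtain ts where x: "x = PT ts" by (cases x)
  have "map2 (tcomp j) ts (map (trunc j) ts) = ts"
    by (induction ts) (auto simp: Suc)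
  then show ?case by (simp add: x)
qed

text \<open>The shape of beta^m_p: two m-globes glued along a p-cell.\<close>
definition cshape :: "nat \<Rightarrow> nat \<Rightarrow> ptree" where
  "cshape m p = susp p (PT [globe (m-p-1), globe (m-p-1)])"

lemma tcomp_globe: "p < m \<Longrightarrow> tcomp p (globe m) (globe m) = cshape m p"
  unfolding cshape_def
proof (induction p arbitrary: m)
  case 0 then show ?case by (cases m) auto
next
  case (Suc p) then show ?case by (cases m) auto
qed

lemma hle_cshape: "p < m \<Longrightarrow> hle m (cshape m p)"
proof -
  assume "p < m"
  then have "m - p = Suc (m - Suc p)" by arith
  then show ?thesis using \<open>p < m\<close> by (simp add: cshape_def hle_susp hle_globe)
qed

lemma trunc_cshape_lt: "p < m \<Longrightarrow> trunc m (cshape (Suc m) p) = cshape m p"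
proof -
  assume p: "p < m"
  have e: "m - p = Suc (m - Suc p)" using p by arith
  have "trunc (m - Suc p) (globe (m - p)) = globe (m - Suc p)" by (simp add: trunc_globe)
  then show ?thesis using p by (simp add: cshape_def trunc_susp e del: globe.simps)
qed

lemma trunc_cshape_eq: "trunc m (cshape (Suc m) m) = globe m"
  by (simp add: cshape_def trunc_susp globe_susp)

section \<open>Positions in a tree\<close>

lemma pos_len: "c \<in> pos t d \<Longrightarrow> length c = Suc d"
  by (induction t d arbitrary: c rule: pos.induct) auto

lemma pos_le: "c \<in> pos t d \<Longrightarrow> hle m t \<Longrightarrow> d \<le> m"
proof (induction t d arbitrary: c m rule: pos.induct)
  case (1 ts) then show ?case by simp
next
  case (2 ts d)
  then obtain i c' where "i < length ts" "c' \<in> pos (ts!i) d" "c = i # c'" by auto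
  moreover from 2(3) obtain m' where "m = Suc m'"
    by (cases m) (use \<open>i < length ts\<close> in auto)
  ultimately show ?case using 2 by (auto simp: nth_mem)
qed

lemma pos_allpos: "c \<in> pos t d \<Longrightarrow> c \<in> allpos t"
  by (auto simp: allpos_def)

lemma pos_psrc_ptgt: "c \<in> pos t (Suc d) \<Longrightarrow> psrc c \<in> pos t d \<and> ptgt c \<in> pos t d"
proof (induction t d arbitrary: c rule: pos.induct)
  case (1 ts)
  then obtain i c' where c: "c = i # c'" "i < length ts" "c' \<in> pos (ts ! i) 0" by auto
  then have "length c' = 1" using pos_len by fastforce
  then obtain j where "c' = [j]" by (cases c') auto
  then show ?case using c by auto
next
  case (2 ts d)
  then obtain i c' where c: "c = i # c'" "i < length ts" "c' \<in> pos (ts ! i) (Suc d)" by auto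
  obtain ts' where tsi: "ts ! i = PT ts'" by (cases "ts ! i")
  from c(3) tsi obtain j c'' where c': "c' = j # c''" "c'' \<in> pos (ts' ! j) d" by auto
  have "length c'' = Suc d" using c'(2) pos_len by blast
  then obtain a c3 where "c'' = a # c3" by (cases c'') auto
  then have "psrc c = i # psrc c'" "ptgt c = i # ptgt c'" using c c' by auto
  with 2 c show ?case by auto
qed

lemma psrc_butlast: "length c \<ge> 2 \<Longrightarrow> psrc c = butlast c"
  by (induction c rule: psrc.induct) auto

lemma ptgt_butlast: "length c \<ge> 2 \<Longrightarrow> ptgt c = butlast (butlast c) @ [Suc (last (butlast c))]"
  by (induction c rule: ptgt.induct) auto

lemma allpos_trunc: "allpos (trunc j t) \<subseteq> allpos t"
proof -
  have "pos (trunc j t) d \<subseteq> pos t d" for d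
  proof (induction j arbitrary: t d)
    case 0 then show ?case by (cases t; cases d) auto
  next
    case (Suc j)
    obtain ts where t: "t = PT ts" by (cases t)
    show ?case
    proof (cases d)
      case 0 then show ?thesis by (auto simp: t)
    next
      case (Suc d') then show ?thesis by (auto simp: t intro: subsetD[OF Suc.IH])
    qed
  qed
  then show ?thesis unfolding allpos_def by blast
qed

lemma pos_susp: "pos (susp p t) d =
   (if d < p then {replicate d 0 @ [j] | j. j \<le> 1} else (\<lambda>c. replicate p 0 @ c) ` pos t (d - p))"
proof (induction p arbitrary: d)
  case 0 then show ?case by simp
next
  case (Suc p)
  show ?case
  proof (cases d)
    case 0 then show ?thesis by (auto simp: le_Suc_eq)
  next
    case (Suc d') then show ?thesis using Suc.IH[of d'] by auto
  qed
qed

lemma pos_globe: "pos (globe i) d =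
   (if d < i then {replicate d 0 @ [j] | j. j \<le> 1} else if d = i then {replicate i 0 @ [0]} else {})"
proof -
  have "pos (PT []) e = (if e = 0 then {[0]} else {})" for e by (cases e) auto
  then show ?thesis by (auto simp: globe_susp pos_susp)
qed

lemma pos_PT2: "pos (PT [g, g]) d =
   (if d = 0 then {[0],[1],[2]} else {i # c | i c. i \<le> 1 \<and> c \<in> pos g (d - 1)})"
proof (cases d)
  case 0 then show ?thesis by auto
next
  case (Suc d')
  have h1: "\<And>i. i < Suc (Suc 0) \<Longrightarrow> [g, g] ! i = g" by (auto simp: less_Suc_eq)
  have h2: "\<And>i. i \<le> Suc 0 \<Longrightarrow> [g, g] ! i = g" by (auto simp: le_Suc_eq)
  show ?thesis using Suc by (auto simp: h1 h2)
qed

lemma pos_cshape: "c \<in> pos (cshape m p) e \<Longrightarrow> p < m \<Longrightarrow>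
   (e < p \<and> (\<exists>j\<le>1. c = replicate e 0 @ [j])) \<or>
   (e = p \<and> (\<exists>j\<le>2. c = replicate p 0 @ [j])) \<or>
   (p < e \<and> e \<le> m \<and> (\<exists>i j. i \<le> 1 \<and> j \<le> 1 \<and> (e = m \<longrightarrow> j = 0) \<and>
        c = replicate p 0 @ i # replicate (e - p - 1) 0 @ [j]))"
  unfolding cshape_def pos_susp pos_PT2 pos_globe
  by (auto split: if_splits simp: numeral_2_eq_2 le_Suc_eq)

lemma pos_cshape_top: "c \<in> pos (cshape m p) e \<Longrightarrow> p < m \<Longrightarrow> e \<le> m \<and> (e = m \<longrightarrow> last c = 0)"
  using pos_cshape[of c m p e] by auto

lemma top_pos_cshape:
  "p < m \<Longrightarrow> i \<le> 1 \<Longrightarrow> j \<le> 1 \<Longrightarrow>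
     replicate p 0 @ i # replicate (m - p - 1) 0 @ [j] \<in> pos (cshape (Suc m) p) m"
  "p < m \<Longrightarrow> i \<le> 1 \<Longrightarrow> replicate p 0 @ i # replicate (m - p - 1) 0 @ [0] \<in> pos (cshape m p) m"
proof -
  assume p: "p < m" and i: "i \<le> 1"
  {
    assume j: "j \<le> 1"
    have "i # replicate (m - p - 1) 0 @ [j] \<in> pos (PT [globe (Suc m - p - 1), globe (Suc m - p - 1)]) (m - p)"
      using p i j by (auto simp: pos_PT2 pos_globe)
    then show "replicate p 0 @ i # replicate (m - p - 1) 0 @ [j] \<in> pos (cshape (Suc m) p) m"
      using p by (auto simp: cshape_def pos_susp)
  }
  have "i # replicate (m - p - 1) 0 @ [0] \<in> pos (PT [globe (m-p-1), globe (m-p-1)]) (m - p)"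
    using p i by (auto simp: pos_PT2 pos_globe)
  then show "replicate p 0 @ i # replicate (m - p - 1) 0 @ [0] \<in> pos (cshape m p) m"
    using p by (auto simp: cshape_def pos_susp)
qed

lemma subt_susp: "subt (susp p t) (replicate p 0 @ c) = subt t c"
  by (induction p) auto

lemma subt_globe: "i \<le> j \<Longrightarrow> subt (globe j) (replicate i 0) = globe (j - i)"
proof (induction i arbitrary: j)
  case 0 then show ?case by simp
next
  case (Suc i) then show ?case by (cases j) auto
qed

section \<open>The free strict n-category on 1 and the monad T\<close>

lemma unit_fun_eq: "(f :: 'x \<Rightarrow> unit) = (\<lambda>_. ())"
  by (rule ext) simp

lemma restrict_unit: "restrict (f :: 'x \<Rightarrow> unit) A = (\<lambda>_. ())"
  by (rule ext) simp

lemma T1_cells: "m \<le> n \<Longrightarrow> gcells (T1 n) m = {(t, \<lambda>_. ()) | t. hle m t}"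
  by (auto simp: T1_def Tg_def labels_def one_def extensional_def unit_fun_eq)
     (metis pos_le order_trans)

lemma T1_src: "gsrc (T1 n) m x = (trunc (m-1) (fst x), \<lambda>_. ())"
  by (cases x) (simp add: T1_def Tg_def unit_fun_eq)

lemma T1_tgt: "gtgt (T1 n) m x = (trunc (m-1) (fst x), \<lambda>_. ())"
  by (cases x) (simp add: T1_def Tg_def unit_fun_eq)

lemma etaT_one: "etaT (one n) m () = (globe m, \<lambda>_. ())"
  by (simp add: etaT_def unit_fun_eq)

lemma beta_lt: "p < m \<Longrightarrow> beta n m p = (cshape m p, \<lambda>_. ())"
  by (simp add: beta_def etaT_one tcompose_def tcomp_globe unit_fun_eq)

lemma beta_eq: "beta n m m = (globe m, \<lambda>_. ())"
  by (simp add: beta_def etaT_one)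

lemma mu_susp: "mu d (susp p t) G = mu (d + p) t (\<lambda>c. G (replicate p 0 @ c))"
proof (induction p arbitrary: d G)
  case 0 then show ?case by simp
next
  case (Suc p)
  have "mu d (susp (Suc p) t) G = mu (Suc d) (susp p t) (\<lambda>c. G (0 # c))" by simp
  also have "\<dots> = mu (d + Suc p) t (\<lambda>c. G (replicate (Suc p) 0 @ c))" using Suc by simp
  finally show ?case .
qed

lemma mu_globe: "mu d (globe j) G = G (replicate j 0 @ [0])"
proof (induction j arbitrary: d G)
  case 0 then show ?case by simp
next
  case (Suc j)
  have "mu d (globe (Suc j)) G = mu (Suc d) (globe j) (\<lambda>c. G (0 # c))" by simp
  then show ?case using Suc by simp
qed

lemma mu_PT2:
  "mu d (PT [g, g]) G = tcompose d (mu (Suc d) g (\<lambda>c. G (0 # c))) (mu (Suc d) g (\<lambda>c. G (1 # c)))"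
  by (simp add: upt_rec)

text \<open>Boundaries of cells of TX whose labelling is a restriction.  The target of an m-cell
  relabels each (m-1)-position c by the label of the last sibling tgt_pos t c.\<close>
definition tgt_pos :: "ptree \<Rightarrow> nat list \<Rightarrow> nat list" where
  "tgt_pos t c = butlast c @ [length (kids (subt t (butlast c)))]"

lemma Tg_src_restrict:
  assumes "trunc (m-1) t = t'" and "\<And>c. c \<in> allpos t' \<Longrightarrow> f c = g c"
  shows "gsrc (Tg n X) m (t, restrict f (allpos t)) = (t', restrict g (allpos t'))"
proof -
  have "allpos t \<inter> allpos t' = allpos t'" using assms(1) allpos_trunc[of "m-1" t] by blast
  then show ?thesis using assms by (auto simp: Tg_def intro!: restrict_ext)
qed

lemma Tg_tgt_restrict:
  assumes "trunc (m-1) t = t'"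
    and "\<And>c. c \<in> allpos t' \<Longrightarrow> length c \<noteq> m \<Longrightarrow> f c = g c"
    and "\<And>c. c \<in> allpos t' \<Longrightarrow> length c = m \<Longrightarrow> tgt_pos t c \<in> allpos t \<and> f (tgt_pos t c) = g c"
  shows "gtgt (Tg n X) m (t, restrict f (allpos t)) = (t', restrict g (allpos t'))"
proof -
  have "allpos t' \<subseteq> allpos t" using assms(1) allpos_trunc[of "m-1" t] by blast
  then show ?thesis using assms(2,3) unfolding assms(1)[symmetric]
    by (auto simp: Tg_def tgt_pos_def intro!: restrict_ext)
qed

lemma tgt_pos_cshape_lt:
  assumes p: "p < m" and i: "i \<le> 1"
  shows "tgt_pos (cshape (Suc m) p) (replicate p 0 @ i # replicate (m - p - 1) 0 @ [0])
           = replicate p 0 @ i # replicate (m - p - 1) 0 @ [1]"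
proof -
  have n2: "[globe (m - p), globe (m - p)] ! i = globe (m - p)" using i by (cases i) auto
  have e: "m - p - (m - Suc p) = 1" using p by arith
  have "subt (cshape (Suc m) p) (replicate p 0 @ i # replicate (m - p - 1) 0) = globe 1"
    using i p by (simp add: cshape_def subt_susp n2 subt_globe e del: globe.simps)
  then show ?thesis by (simp add: tgt_pos_def butlast_append)
qed

lemma tgt_pos_cshape_eq:
  "tgt_pos (cshape (Suc m) m) (replicate m 0 @ [0]) = replicate m 0 @ [2]"
  "replicate m 0 @ [2] \<in> pos (cshape (Suc m) m) m"
proof -
  have "subt (cshape (Suc m) m) (replicate m 0) = PT [globe 0, globe 0]"
    using subt_susp[of m _ "[]"] by (simp add: cshape_def)
  then show "tgt_pos (cshape (Suc m) m) (replicate m 0 @ [0]) = replicate m 0 @ [2]"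
    by (simp add: tgt_pos_def)
  show "replicate m 0 @ [2] \<in> pos (cshape (Suc m) m) m"
    by (auto simp: cshape_def pos_susp pos_PT2)
qed

section \<open>Iterated boundaries in globular sets\<close>

lemma isrc_Suc_inner: "isrc X m (Suc j) a = isrc X (m-1) j (gsrc X m a)"
  by (induction j) auto

lemma itgt_Suc_inner: "itgt X m (Suc j) a = itgt X (m-1) j (gtgt X m a)"
  by (induction j) auto

locale globular =
  fixes n :: nat and K :: "'a gset"
  assumes gset: "is_gset n K"
begin

lemma cell_dim: "a \<in> gcells K m \<Longrightarrow> m \<le> n"
  using gset unfolding is_gset_def by (metis empty_iff not_le)

lemma bnd_cell: "a \<in> gcells K m \<Longrightarrow> 1 \<le> m \<Longrightarrow> gsrc K m a \<in> gcells K (m-1) \<and> gtgt K m a \<in> gcells K (m-1)"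
  using gset cell_dim unfolding is_gset_def by blast

lemma glob_eqs: "a \<in> gcells K m \<Longrightarrow> 2 \<le> m \<Longrightarrow>
   gsrc K (m-1) (gsrc K m a) = gsrc K (m-1) (gtgt K m a) \<and> gtgt K (m-1) (gsrc K m a) = gtgt K (m-1) (gtgt K m a)"
  using gset cell_dim unfolding is_gset_def by blast

lemma iter_bnd_cell: "a \<in> gcells K m \<Longrightarrow> j \<le> m \<Longrightarrow> isrc K m j a \<in> gcells K (m-j) \<and> itgt K m j a \<in> gcells K (m-j)"
proof (induction j)
  case 0 then show ?case by simp
next
  case (Suc j)
  then have "isrc K m j a \<in> gcells K (m-j)" "itgt K m j a \<in> gcells K (m-j)" "1 \<le> m - j" by auto
  then show ?case using bnd_cell[of "isrc K m j a" "m-j"] bnd_cell[of "itgt K m j a" "m-j"] by auto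
qed

text \<open>By the globular identities, the source and target of an iterated boundary of a cell do
  not depend on whether that boundary was an iterated source or an iterated target.\<close>
lemma bnd_iter_bnd:
  assumes a: "a \<in> gcells K m" and d: "d < m"
  shows "gsrc K (Suc d) (isrc K m (m - Suc d) a) = isrc K m (m - d) a"
    "gtgt K (Suc d) (isrc K m (m - Suc d) a) = itgt K m (m - d) a"
    "gsrc K (Suc d) (itgt K m (m - Suc d) a) = isrc K m (m - d) a"
    "gtgt K (Suc d) (itgt K m (m - Suc d) a) = itgt K m (m - d) a"
proof -
  have mixed: "gsrc K (m-j) (itgt K m j a) = isrc K m (Suc j) a \<and>
               gtgt K (m-j) (isrc K m j a) = itgt K m (Suc j) a" if "j < m" for j
    using that
  proof (induction j)
    case 0 then show ?case by simp
  next
    case (Suc j)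
    then have h: "isrc K m j a \<in> gcells K (m-j)" "itgt K m j a \<in> gcells K (m-j)" "2 \<le> m - j"
      using iter_bnd_cell[OF a] by auto
    show ?case using glob_eqs[OF h(1) h(3)] glob_eqs[OF h(2) h(3)] Suc by simp
  qed
  define j where "j = m - Suc d"
  have e: "m - d = Suc j" "m - j = Suc d" "j < m" using d by (auto simp: j_def)
  show "gsrc K (Suc d) (isrc K m (m - Suc d) a) = isrc K m (m - d) a"
    "gtgt K (Suc d) (itgt K m (m - Suc d) a) = itgt K m (m - d) a"
    unfolding j_def[symmetric] e by (simp_all add: e)
  show "gtgt K (Suc d) (isrc K m (m - Suc d) a) = itgt K m (m - d) a"
    "gsrc K (Suc d) (itgt K m (m - Suc d) a) = isrc K m (m - d) a"
    unfolding j_def[symmetric] e using mixed[OF e(3)] by (simp_all add: e)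
qed

lemma iter_bnd_src_tgt:
  assumes b: "b \<in> gcells K m" and m: "2 \<le> m" and j: "1 \<le> j"
  shows "itgt K (m-1) j (gsrc K m b) = itgt K (m-1) j (gtgt K m b)"
    "isrc K (m-1) j (gtgt K m b) = isrc K (m-1) j (gsrc K m b)"
  using j
proof (induction j)
  case 0
  { case 1 then show ?case by simp }
  { case 2 then show ?case by simp }
next
  case (Suc j)
  { case 1 show ?case
      using Suc.IH(1) glob_eqs[OF b m] by (cases j) simp_all }
  { case 2 show ?case
      using Suc.IH(2) glob_eqs[OF b m] by (cases j) simp_all }
qed

lemma iter_bnd_via_bnd:
  assumes b: "b \<in> gcells K (Suc m)" and e: "e \<le> m"
  shows "isrc K (Suc m) (Suc m - e) b = isrc K m (m - e) (gsrc K (Suc m) b)"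
    "itgt K (Suc m) (Suc m - e) b = itgt K m (m - e) (gtgt K (Suc m) b)"
    "e < m \<Longrightarrow> itgt K (Suc m) (Suc m - e) b = itgt K m (m - e) (gsrc K (Suc m) b)"
    "e < m \<Longrightarrow> isrc K (Suc m) (Suc m - e) b = isrc K m (m - e) (gtgt K (Suc m) b)"
proof -
  have me: "Suc m - e = Suc (m - e)" using e by arith
  show 1: "isrc K (Suc m) (Suc m - e) b = isrc K m (m - e) (gsrc K (Suc m) b)"
    unfolding me isrc_Suc_inner by simp
  show 2: "itgt K (Suc m) (Suc m - e) b = itgt K m (m - e) (gtgt K (Suc m) b)"
    unfolding me itgt_Suc_inner by simp
  show "e < m \<Longrightarrow> itgt K (Suc m) (Suc m - e) b = itgt K m (m - e) (gsrc K (Suc m) b)"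
    using 2 iter_bnd_src_tgt[OF b] by simp
  show "e < m \<Longrightarrow> isrc K (Suc m) (Suc m - e) b = isrc K m (m - e) (gtgt K (Suc m) b)"
    using 1 iter_bnd_src_tgt[OF b] by simp
qed

end

section \<open>Collections\<close>

locale collection = globular +
  fixes k :: "nat \<Rightarrow> 'a \<Rightarrow> t1cell"
  assumes kmap: "gmap n K (T1 n) k"
begin

definition shape :: "nat \<Rightarrow> 'a \<Rightarrow> ptree" where
  "shape m a = fst (k m a)"

lemma k_shape: "a \<in> gcells K m \<Longrightarrow> k m a = (shape m a, \<lambda>_. ()) \<and> hle m (shape m a)"
proof -
  assume a: "a \<in> gcells K m"
  have "k m a \<in> gcells (T1 n) m" using kmap a cell_dim[OF a] unfolding gmap_def by blast
  then show ?thesis using T1_cells[OF cell_dim[OF a]] by (auto simp: shape_def)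
qed

lemma shape_bnd: "a \<in> gcells K m \<Longrightarrow> 1 \<le> m \<Longrightarrow>
  shape (m-1) (gsrc K m a) = trunc (m-1) (shape m a) \<and> shape (m-1) (gtgt K m a) = trunc (m-1) (shape m a)"
proof -
  assume a: "a \<in> gcells K m" and m: "1 \<le> m"
  have "k (m-1) (gsrc K m a) = gsrc (T1 n) m (k m a)" "k (m-1) (gtgt K m a) = gtgt (T1 n) m (k m a)"
    using kmap a cell_dim[OF a] m unfolding gmap_def by blast+
  then show ?thesis by (simp add: shape_def T1_src T1_tgt)
qed

lemma shape_iter_bnd: "a \<in> gcells K m \<Longrightarrow> j \<le> m \<Longrightarrow>
   shape (m-j) (isrc K m j a) = trunc (m-j) (shape m a) \<and> shape (m-j) (itgt K m j a) = trunc (m-j) (shape m a)"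
proof (induction j)
  case 0 then show ?case using k_shape trunc_hle by auto
next
  case (Suc j)
  then have h: "isrc K m j a \<in> gcells K (m-j)" "itgt K m j a \<in> gcells K (m-j)" "1 \<le> m - j"
    using iter_bnd_cell by auto
  show ?case using shape_bnd[OF h(1) h(3)] shape_bnd[OF h(2) h(3)] Suc
    by (simp add: trunc_trunc min_def)
qed

end

section \<open>Binary composition in an operad with a system of compositions\<close>

locale composing_operad = collection +
  fixes eK :: "nat \<Rightarrow> unit \<Rightarrow> 'a" and mK :: "nat \<Rightarrow> 'a \<times> 'a tcell \<Rightarrow> 'a"
    and sig :: "nat \<Rightarrow> t1cell \<Rightarrow> 'a"
  assumes op: "operad n K k eK mK" and cs: "comp_system n K k eK sig"
begin

lemma mult_map: "gmap n (tensor n K k K) K mK"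
  using op by (simp add: operad_def)

lemma mult_k: "m \<le> n \<Longrightarrow> x \<in> gcells (tensor n K k K) m \<Longrightarrow> k m (mK m x) = tensor_coll k m x"
  using op by (simp add: operad_def)

lemma left_unit: "m \<le> n \<Longrightarrow> a \<in> gcells K m \<Longrightarrow> mK m (eK m (), etaT K m a) = a"
  using op by (simp add: operad_def)

lemma sig_k: "m \<le> n \<Longrightarrow> x \<in> gcells (Sg n) m \<Longrightarrow> k m (sig m x) = x"
  using cs by (simp add: comp_system_def)

lemma sig_unit: "m \<le> n \<Longrightarrow> sig m (beta n m m) = eK m ()"
  using cs by (simp add: comp_system_def)

lemma beta_Sg: "p \<le> m \<Longrightarrow> m \<le> n \<Longrightarrow> beta n m p \<in> gcells (Sg n) m"
  by (auto simp: Sg_def)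

lemma sig_cell: "p \<le> m \<Longrightarrow> m \<le> n \<Longrightarrow> sig m (beta n m p) \<in> gcells K m"
  using cs beta_Sg unfolding comp_system_def gmap_def by blast

lemma sig_bnd:
  assumes p: "p \<le> m" and mn: "Suc m \<le> n"
  shows "gsrc K (Suc m) (sig (Suc m) (beta n (Suc m) p)) = sig m (beta n m p)"
    "gtgt K (Suc m) (sig (Suc m) (beta n (Suc m) p)) = sig m (beta n m p)"
proof -
  have "sig m (gsrc (Sg n) (Suc m) (beta n (Suc m) p)) = gsrc K (Suc m) (sig (Suc m) (beta n (Suc m) p))"
       "sig m (gtgt (Sg n) (Suc m) (beta n (Suc m) p)) = gtgt K (Suc m) (sig (Suc m) (beta n (Suc m) p))"
    using cs beta_Sg[of p "Suc m"] p mn unfolding comp_system_def gmap_def by auto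
  moreover have "gsrc (Sg n) (Suc m) (beta n (Suc m) p) = beta n m p"
    "gtgt (Sg n) (Suc m) (beta n (Suc m) p) = beta n m p"
    using p by (auto simp: Sg_def T1_src T1_tgt beta_lt beta_eq trunc_cshape_lt trunc_cshape_eq
        le_less)
  ultimately show "gsrc K (Suc m) (sig (Suc m) (beta n (Suc m) p)) = sig m (beta n m p)"
    "gtgt K (Suc m) (sig (Suc m) (beta n (Suc m) p)) = sig m (beta n m p)"
    by simp_all
qed

lemma mult_bnd:
  assumes x: "x \<in> gcells (tensor n K k K) (Suc m)" and mn: "Suc m \<le> n"
  shows "gsrc K (Suc m) (mK (Suc m) x) = mK m (gsrc K (Suc m) (fst x), gsrc (Tg n K) (Suc m) (snd x))"
    "gtgt K (Suc m) (mK (Suc m) x) = mK m (gtgt K (Suc m) (fst x), gtgt (Tg n K) (Suc m) (snd x))"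
  using mult_map x mn unfolding gmap_def by (auto simp: tensor_def split: prod.splits)

definition composable :: "nat \<Rightarrow> nat \<Rightarrow> 'a \<Rightarrow> 'a \<Rightarrow> bool" where
  "composable m p a1 a2 \<longleftrightarrow> a1 \<in> gcells K m \<and> a2 \<in> gcells K m \<and> p < m \<and>
     itgt K m (m-p) a1 = isrc K m (m-p) a2"

text \<open>The labelling of cshape m p by a1 and a2: a position c lies in the half of a1 or of a2
  (pick), and is labelled by the iterated source or target of that cell of the dimension of c.\<close>
definition pick :: "nat \<Rightarrow> 'a \<Rightarrow> 'a \<Rightarrow> nat list \<Rightarrow> 'a" where
  "pick p a1 a2 c = (if (p < length c - 1 \<and> 1 \<le> c ! p) \<or> (length c - 1 = p \<and> last c = 2) then a2 else a1)"

definition lab :: "nat \<Rightarrow> nat \<Rightarrow> 'a \<Rightarrow> 'a \<Rightarrow> nat list \<Rightarrow> 'a" where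
  "lab m p a1 a2 c = (if last c = 0 then isrc K m (m - (length c - 1)) (pick p a1 a2 c)
                      else itgt K m (m - (length c - 1)) (pick p a1 a2 c))"

definition clab :: "nat \<Rightarrow> nat \<Rightarrow> 'a \<Rightarrow> 'a \<Rightarrow> 'a tcell" where
  "clab m p a1 a2 = (cshape m p, restrict (lab m p a1 a2) (allpos (cshape m p)))"

definition comp :: "nat \<Rightarrow> nat \<Rightarrow> 'a \<Rightarrow> 'a \<Rightarrow> 'a" where
  "comp m p a1 a2 = mK m (sig m (beta n m p), clab m p a1 a2)"

lemma pick_cases: "pick p a1 a2 c = a1 \<or> pick p a1 a2 c = a2"
  by (simp add: pick_def)

lemma lab_bnd_below:
  assumes a1: "a1 \<in> gcells K m" and p: "p < m" and e: "Suc e < p" and j: "j \<le> 1"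
    and c: "c = replicate (Suc e) 0 @ [j]"
  shows "gsrc K (Suc e) (lab m p a1 a2 c) = lab m p a1 a2 (psrc c) \<and>
         gtgt K (Suc e) (lab m p a1 a2 c) = lab m p a1 a2 (ptgt c)"
proof -
  have em: "e < m" using e p by simp
  have "c = replicate e 0 @ [0, j]"
    using c by (metis append.assoc append_Cons append_Nil replicate_Suc replicate_append_same)
  then have "psrc c = replicate e 0 @ [0]" "ptgt c = replicate e 0 @ [1]"
    by (simp_all add: psrc_butlast ptgt_butlast butlast_append)
  then show ?thesis using j e
    by (auto simp: c lab_def pick_def bnd_iter_bnd[OF a1 em] le_Suc_eq)
qed

lemma lab_bnd_at:
  assumes cp: "composable m p a1 a2" and e: "Suc e = p" and j: "j \<le> 2"
    and c: "c = replicate p 0 @ [j]"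
  shows "gsrc K (Suc e) (lab m p a1 a2 c) = lab m p a1 a2 (psrc c) \<and>
         gtgt K (Suc e) (lab m p a1 a2 c) = lab m p a1 a2 (ptgt c)"
proof -
  have a1: "a1 \<in> gcells K m" and a2: "a2 \<in> gcells K m" and em: "e < m"
    and mid: "itgt K m (m - Suc e) a1 = isrc K m (m - Suc e) a2"
    using cp e by (auto simp: composable_def)
  have "isrc K m (m - e) a2 = isrc K m (m - e) a1" "itgt K m (m - e) a2 = itgt K m (m - e) a1"
    using bnd_iter_bnd[OF a2 em] bnd_iter_bnd[OF a1 em] mid by metis+
  moreover have "c = replicate e 0 @ [0, j]"
    using c e by (metis append.assoc append_Cons append_Nil replicate_Suc replicate_append_same)
  then have "psrc c = replicate e 0 @ [0]" "ptgt c = replicate e 0 @ [1]"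
    by (simp_all add: psrc_butlast ptgt_butlast butlast_append)
  moreover have "j = 0 \<or> j = 1 \<or> j = 2" using j by auto
  ultimately show ?thesis using e
    by (auto simp: c lab_def pick_def bnd_iter_bnd[OF a1 em] bnd_iter_bnd[OF a2 em])
qed

lemma lab_bnd_above:
  assumes cp: "composable m p a1 a2" and e: "p < Suc e" "Suc e \<le> m"
    and ij: "i \<le> 1" "j \<le> 1" and c: "c = replicate p 0 @ i # replicate (e - p) 0 @ [j]"
  shows "gsrc K (Suc e) (lab m p a1 a2 c) = lab m p a1 a2 (psrc c) \<and>
         gtgt K (Suc e) (lab m p a1 a2 c) = lab m p a1 a2 (ptgt c)"
proof -
  have a1: "a1 \<in> gcells K m" and a2: "a2 \<in> gcells K m" and em: "e < m"
    and mid: "itgt K m (m - p) a1 = isrc K m (m - p) a2"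
    using cp e by (auto simp: composable_def)
  define b where "b = (if i = 0 then a1 else a2)"
  have b: "b \<in> gcells K m" using a1 a2 by (simp add: b_def)
  have lab_c: "lab m p a1 a2 c = (if j = 0 then isrc K m (m - Suc e) b else itgt K m (m - Suc e) b)"
    using e by (simp add: c lab_def pick_def nth_append b_def)
  have "lab m p a1 a2 (psrc c) = isrc K m (m - e) b \<and> lab m p a1 a2 (ptgt c) = itgt K m (m - e) b"
  proof (cases "e = p")
    case True
    have ps: "psrc c = replicate p 0 @ [i]" "ptgt c = replicate p 0 @ [Suc i]"
      using c True by (simp_all add: psrc_butlast ptgt_butlast butlast_append)
    consider "i = 0" | "i = 1" using ij by linarith
    then show ?thesis using True mid unfolding ps by cases (simp_all add: lab_def pick_def b_def)
  next
    case False
    then have ep: "p < e" using e by simp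
    have "e - p = Suc (e - p - 1)" using ep by simp
    then have "replicate (e - p) 0 = replicate (e - p - 1) 0 @ [0::nat]"
      by (metis replicate_Suc replicate_append_same)
    then have "c = replicate p 0 @ i # replicate (e - p - 1) 0 @ [0, j]" using c by simp
    then have "psrc c = replicate p 0 @ i # replicate (e - p - 1) 0 @ [0]"
      "ptgt c = replicate p 0 @ i # replicate (e - p - 1) 0 @ [1]"
      by (simp_all add: psrc_butlast ptgt_butlast butlast_append)
    then show ?thesis using ep by (simp add: lab_def pick_def nth_append b_def)
  qed
  then show ?thesis using lab_c bnd_iter_bnd[OF b em] by auto
qed

lemma lab_bnd:
  assumes cp: "composable m p a1 a2" and c: "c \<in> pos (cshape m p) (Suc e)"
  shows "gsrc K (Suc e) (lab m p a1 a2 c) = lab m p a1 a2 (psrc c) \<and>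
         gtgt K (Suc e) (lab m p a1 a2 c) = lab m p a1 a2 (ptgt c)"
proof -
  have p: "p < m" and a1: "a1 \<in> gcells K m" using cp by (auto simp: composable_def)
  from pos_cshape[OF c p] show ?thesis
  proof (elim disjE conjE exE)
    fix j assume "Suc e < p" "j \<le> 1" "c = replicate (Suc e) 0 @ [j]"
    then show ?thesis using lab_bnd_below[OF a1 p] by blast
  next
    fix j assume "Suc e = p" "j \<le> 2" "c = replicate p 0 @ [j]"
    then show ?thesis using lab_bnd_at[OF cp] by blast
  next
    fix i j assume "p < Suc e" "Suc e \<le> m" "i \<le> 1" "j \<le> 1"
      "c = replicate p 0 @ i # replicate (Suc e - p - 1) 0 @ [j]"
    then show ?thesis using lab_bnd_above[OF cp, of e i j c] by simp
  qed
qed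

lemma clab_cell:
  assumes cp: "composable m p a1 a2"
  shows "clab m p a1 a2 \<in> gcells (Tg n K) m"
proof -
  have a1: "a1 \<in> gcells K m" and a2: "a2 \<in> gcells K m" and p: "p < m"
    using cp by (auto simp: composable_def)
  have mn: "m \<le> n" using cell_dim[OF a1] .
  have hl: "hle m (cshape m p)" using hle_cshape[OF p] .
  have lab_cell: "lab m p a1 a2 c \<in> gcells K e" if c: "c \<in> pos (cshape m p) e" for c e
  proof -
    have "pick p a1 a2 c \<in> gcells K m" using pick_cases a1 a2 by metis
    then show ?thesis using pos_len[OF c] pos_le[OF c hl] iter_bnd_cell[of _ m "m - e"]
      by (auto simp: lab_def)
  qed
  have bnd: "gsrc K (Suc e) (restrict (lab m p a1 a2) (allpos (cshape m p)) c)
              = restrict (lab m p a1 a2) (allpos (cshape m p)) (psrc c) \<and>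
            gtgt K (Suc e) (restrict (lab m p a1 a2) (allpos (cshape m p)) c)
              = restrict (lab m p a1 a2) (allpos (cshape m p)) (ptgt c)"
    if "c \<in> pos (cshape m p) (Suc e)" for c e
  proof -
    have "psrc c \<in> allpos (cshape m p)" "ptgt c \<in> allpos (cshape m p)" "c \<in> allpos (cshape m p)"
      using pos_psrc_ptgt[OF that(1)] pos_allpos that(1) by blast+
    then show ?thesis using lab_bnd[OF cp that(1)] by simp
  qed
  have "labels K (cshape m p) (restrict (lab m p a1 a2) (allpos (cshape m p)))"
    unfolding labels_def using lab_cell pos_allpos bnd restrict_extensional by simp
  then show ?thesis using mn hl by (simp add: Tg_def clab_def)
qed

lemma mult_arg_cell:
  assumes cp: "composable m p a1 a2"
  shows "(sig m (beta n m p), clab m p a1 a2) \<in> gcells (tensor n K k K) m"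
proof -
  have p: "p < m" and mn: "m \<le> n" using cp cell_dim by (auto simp: composable_def)
  have "k m (sig m (beta n m p)) = beta n m p" using sig_k[OF mn beta_Sg[of p m]] p mn by simp
  then show ?thesis
    using sig_cell[of p m] p mn clab_cell[OF cp]
    by (simp add: tensor_def beta_lt[OF p] Tbang_def Tmap_def clab_def restrict_unit)
qed

lemma comp_cell: "composable m p a1 a2 \<Longrightarrow> comp m p a1 a2 \<in> gcells K m"
  using mult_map mult_arg_cell cell_dim unfolding gmap_def comp_def composable_def by blast

lemma comp_shape:
  assumes cp: "composable m p a1 a2"
  shows "shape m (comp m p a1 a2) = tcomp p (shape m a1) (shape m a2)"
proof -
  have a1: "a1 \<in> gcells K m" and a2: "a2 \<in> gcells K m" and p: "p < m"
    using cp by (auto simp: composable_def)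
  have mn: "m \<le> n" using cell_dim[OF a1] .
  define G where "G = restrict (\<lambda>c. k (length c - 1) (restrict (lab m p a1 a2) (allpos (cshape m p)) c))
                                (allpos (cshape m p))"
  have G: "G (replicate p 0 @ i # replicate (m - p - 1) 0 @ [0]) = k m (if i = 0 then a1 else a2)"
    if i: "i \<le> 1" for i
  proof -
    have "replicate p 0 @ i # replicate (m - p - 1) 0 @ [0] \<in> allpos (cshape m p)"
      using top_pos_cshape(2)[OF p i] pos_allpos by blast
    moreover have "m - (m - p - 1 + (p + 1)) = 0" by simp
    ultimately show ?thesis using i p unfolding G_def
      by (auto simp: lab_def pick_def nth_append)
  qed
  have "k m (comp m p a1 a2) = muT (Tmap k m (clab m p a1 a2))"
    using mult_k[OF mn mult_arg_cell[OF cp]] by (simp add: comp_def tensor_coll_def)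
  also have "\<dots> = mu 0 (cshape m p) G" by (simp add: muT_def Tmap_def clab_def G_def)
  also have "\<dots> = tcompose p (G (replicate p 0 @ 0 # replicate (m - p - 1) 0 @ [0]))
                            (G (replicate p 0 @ 1 # replicate (m - p - 1) 0 @ [0]))"
    by (simp add: cshape_def mu_susp mu_PT2 mu_globe)
  also have "\<dots> = tcompose p (k m a1) (k m a2)" using G[of 0] G[of 1] by simp
  also have "\<dots> = (tcomp p (shape m a1) (shape m a2), \<lambda>_. ())"
    using k_shape[OF a1] k_shape[OF a2] by (simp add: tcompose_def unit_fun_eq)
  finally show ?thesis by (simp add: shape_def)
qed

lemma lab_via_src:
  assumes a1: "a1 \<in> gcells K (Suc m)" and a2: "a2 \<in> gcells K (Suc m)"
    and lc: "length c = Suc e" and e: "e \<le> m" and l: "last c \<noteq> 0 \<Longrightarrow> e < m"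
  shows "lab (Suc m) p a1 a2 c = lab m p (gsrc K (Suc m) a1) (gsrc K (Suc m) a2) c"
proof -
  have pk: "pick p (gsrc K (Suc m) a1) (gsrc K (Suc m) a2) c = gsrc K (Suc m) (pick p a1 a2 c)"
    by (simp add: pick_def)
  have b: "pick p a1 a2 c \<in> gcells K (Suc m)" using pick_cases a1 a2 by metis
  show ?thesis unfolding lab_def pk lc using iter_bnd_via_bnd(1,3)[OF b e] l by simp
qed

lemma lab_via_tgt:
  assumes a1: "a1 \<in> gcells K (Suc m)" and a2: "a2 \<in> gcells K (Suc m)"
    and lc: "length c = Suc e" and e: "e < m"
  shows "lab (Suc m) p a1 a2 c = lab m p (gtgt K (Suc m) a1) (gtgt K (Suc m) a2) c"
proof -
  have pk: "pick p (gtgt K (Suc m) a1) (gtgt K (Suc m) a2) c = gtgt K (Suc m) (pick p a1 a2 c)"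
    by (simp add: pick_def)
  have b: "pick p a1 a2 c \<in> gcells K (Suc m)" using pick_cases a1 a2 by metis
  show ?thesis unfolding lab_def pk lc using iter_bnd_via_bnd(2,4)[OF b] e by simp
qed

lemma lab_top:
  assumes p: "p < m" and i: "i \<le> 1"
  shows "lab (Suc m) p a1 a2 (replicate p 0 @ i # replicate (m - p - 1) 0 @ [1])
           = gtgt K (Suc m) (if i = 0 then a1 else a2)"
    "lab m p b1 b2 (replicate p 0 @ i # replicate (m - p - 1) 0 @ [0]) = (if i = 0 then b1 else b2)"
  using p i by (auto simp: lab_def pick_def nth_append)

text \<open>On the positions of a globe, cshape m m is labelled like the unit etaT of its first cell.\<close>
lemma lab_globe:
  assumes "c \<in> pos (globe m) e"
  shows "lab m m b1 b2 c = (if last c = 0 then isrc K m (m - e) b1 else itgt K m (m - e) b1)"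
  using assms by (auto simp: lab_def pick_def pos_globe split: if_splits)

lemma clab_src_lt:
  assumes a1: "a1 \<in> gcells K (Suc m)" and a2: "a2 \<in> gcells K (Suc m)" and p: "p < m"
  shows "gsrc (Tg n K) (Suc m) (clab (Suc m) p a1 a2) = clab m p (gsrc K (Suc m) a1) (gsrc K (Suc m) a2)"
proof -
  have "lab (Suc m) p a1 a2 c = lab m p (gsrc K (Suc m) a1) (gsrc K (Suc m) a2) c"
    if "c \<in> allpos (cshape m p)" for c
  proof -
    from that obtain e where ce: "c \<in> pos (cshape m p) e" by (auto simp: allpos_def)
    then show ?thesis using lab_via_src[OF a1 a2 pos_len[OF ce]] pos_cshape_top[OF ce p] by auto
  qed
  then show ?thesis unfolding clab_def using trunc_cshape_lt[OF p] by (intro Tg_src_restrict) auto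
qed

lemma clab_tgt_lt:
  assumes a1: "a1 \<in> gcells K (Suc m)" and a2: "a2 \<in> gcells K (Suc m)" and p: "p < m"
  shows "gtgt (Tg n K) (Suc m) (clab (Suc m) p a1 a2) = clab m p (gtgt K (Suc m) a1) (gtgt K (Suc m) a2)"
proof -
  have below: "lab (Suc m) p a1 a2 c = lab m p (gtgt K (Suc m) a1) (gtgt K (Suc m) a2) c"
    if "c \<in> allpos (cshape m p)" "length c \<noteq> Suc m" for c
  proof -
    from that obtain e where ce: "c \<in> pos (cshape m p) e" by (auto simp: allpos_def)
    then show ?thesis using lab_via_tgt[OF a1 a2 pos_len[OF ce]] pos_cshape_top[OF ce p] that(2)
      pos_len[OF ce] by fastforce
  qed
  have top: "tgt_pos (cshape (Suc m) p) c \<in> allpos (cshape (Suc m) p) \<and>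
      lab (Suc m) p a1 a2 (tgt_pos (cshape (Suc m) p) c) = lab m p (gtgt K (Suc m) a1) (gtgt K (Suc m) a2) c"
    if "c \<in> allpos (cshape m p)" "length c = Suc m" for c
  proof -
    from that obtain e where ce: "c \<in> pos (cshape m p) e" by (auto simp: allpos_def)
    with that(2) have "e = m" using pos_len by fastforce
    with pos_cshape[OF ce p] p obtain i where i: "i \<le> 1"
      and c: "c = replicate p 0 @ i # replicate (m - p - 1) 0 @ [0]" by auto
    show ?thesis unfolding c tgt_pos_cshape_lt[OF p i] lab_top[OF p i]
      using top_pos_cshape(1)[OF p i, of 1] pos_allpos by auto
  qed
  show ?thesis unfolding clab_def using trunc_cshape_lt[OF p] below top
    by (intro Tg_tgt_restrict) auto
qed

lemma clab_src_eq:
  assumes a1: "a1 \<in> gcells K (Suc m)" and a2: "a2 \<in> gcells K (Suc m)"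
  shows "gsrc (Tg n K) (Suc m) (clab (Suc m) m a1 a2) = etaT K m (gsrc K (Suc m) a1)"
proof -
  have "lab (Suc m) m a1 a2 c = (if last c = 0 then isrc K m (m - (length c - 1)) (gsrc K (Suc m) a1)
                                 else itgt K m (m - (length c - 1)) (gsrc K (Suc m) a1))"
    if "c \<in> allpos (globe m)" for c
  proof -
    from that obtain e where ce: "c \<in> pos (globe m) e" by (auto simp: allpos_def)
    moreover have "e \<le> m" "last c \<noteq> 0 \<Longrightarrow> e < m"
      using ce by (auto simp: pos_globe split: if_splits)
    ultimately show ?thesis using lab_via_src[OF a1 a2 pos_len[OF ce]] lab_globe pos_len by simp
  qed
  then show ?thesis unfolding clab_def etaT_def using trunc_cshape_eq
    by (intro Tg_src_restrict) auto
qed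

lemma clab_tgt_eq:
  assumes a1: "a1 \<in> gcells K (Suc m)" and a2: "a2 \<in> gcells K (Suc m)"
    and cp: "gtgt K (Suc m) a1 = gsrc K (Suc m) a2"
  shows "gtgt (Tg n K) (Suc m) (clab (Suc m) m a1 a2) = etaT K m (gtgt K (Suc m) a2)"
proof -
  let ?eta = "\<lambda>c. if last c = 0 then isrc K m (m - (length c - 1)) (gtgt K (Suc m) a2)
                  else itgt K m (m - (length c - 1)) (gtgt K (Suc m) a2)"
  have below: "lab (Suc m) m a1 a2 c = ?eta c" if "c \<in> allpos (globe m)" "length c \<noteq> Suc m" for c
  proof -
    from that obtain e where ce: "c \<in> pos (globe m) e" by (auto simp: allpos_def)
    with that(2) have e: "e < m" and lc: "length c = Suc e"
      using pos_len by (fastforce simp: pos_globe split: if_splits)+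
    have "isrc K m (m - e) (gtgt K (Suc m) a2) = isrc K m (m - e) (gsrc K (Suc m) a2)"
      "itgt K m (m - e) (gsrc K (Suc m) a2) = itgt K m (m - e) (gtgt K (Suc m) a2)"
      using iter_bnd_src_tgt[OF a2, of "m - e"] e by simp_all
    then show ?thesis using lab_via_tgt[OF a1 a2 lc e] lab_globe[OF ce] cp lc by simp
  qed
  have top: "tgt_pos (cshape (Suc m) m) c \<in> allpos (cshape (Suc m) m) \<and>
      lab (Suc m) m a1 a2 (tgt_pos (cshape (Suc m) m) c) = ?eta c"
    if "c \<in> allpos (globe m)" "length c = Suc m" for c
  proof -
    from that obtain e where "c \<in> pos (globe m) e" by (auto simp: allpos_def)
    with that(2) have c: "c = replicate m 0 @ [0]" using pos_len by (fastforce simp: pos_globe split: if_splits)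
    show ?thesis unfolding c tgt_pos_cshape_eq(1) using tgt_pos_cshape_eq(2) pos_allpos
      by (auto simp: lab_def pick_def)
  qed
  show ?thesis unfolding clab_def etaT_def using trunc_cshape_eq below top
    by (intro Tg_tgt_restrict) auto
qed

lemma comp_bnd_lt:
  assumes cp: "composable (Suc m) p a1 a2" and p: "p < m"
  shows "gsrc K (Suc m) (comp (Suc m) p a1 a2) = comp m p (gsrc K (Suc m) a1) (gsrc K (Suc m) a2)"
    "gtgt K (Suc m) (comp (Suc m) p a1 a2) = comp m p (gtgt K (Suc m) a1) (gtgt K (Suc m) a2)"
proof -
  have a1: "a1 \<in> gcells K (Suc m)" and a2: "a2 \<in> gcells K (Suc m)" and mn: "Suc m \<le> n"
    using cp cell_dim by (auto simp: composable_def)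
  note x = mult_arg_cell[OF cp]
  show "gsrc K (Suc m) (comp (Suc m) p a1 a2) = comp m p (gsrc K (Suc m) a1) (gsrc K (Suc m) a2)"
    using mult_bnd(1)[OF x mn] sig_bnd(1)[of p m] p mn clab_src_lt[OF a1 a2 p] by (simp add: comp_def)
  show "gtgt K (Suc m) (comp (Suc m) p a1 a2) = comp m p (gtgt K (Suc m) a1) (gtgt K (Suc m) a2)"
    using mult_bnd(2)[OF x mn] sig_bnd(2)[of p m] p mn clab_tgt_lt[OF a1 a2 p] by (simp add: comp_def)
qed

lemma comp_bnd_eq:
  assumes cp: "composable (Suc m) m a1 a2"
  shows "gsrc K (Suc m) (comp (Suc m) m a1 a2) = gsrc K (Suc m) a1"
    "gtgt K (Suc m) (comp (Suc m) m a1 a2) = gtgt K (Suc m) a2"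
proof -
  have a1: "a1 \<in> gcells K (Suc m)" and a2: "a2 \<in> gcells K (Suc m)" and mn: "Suc m \<le> n"
    and mid: "gtgt K (Suc m) a1 = gsrc K (Suc m) a2"
    using cp cell_dim by (auto simp: composable_def)
  have bnd: "gsrc K (Suc m) a1 \<in> gcells K m" "gtgt K (Suc m) a2 \<in> gcells K m"
    using bnd_cell[OF a1] bnd_cell[OF a2] by auto
  note x = mult_arg_cell[OF cp]
  have sig: "gsrc K (Suc m) (sig (Suc m) (beta n (Suc m) m)) = eK m ()"
    "gtgt K (Suc m) (sig (Suc m) (beta n (Suc m) m)) = eK m ()"
    using sig_bnd[of m m] sig_unit[of m] mn by simp_all
  show "gsrc K (Suc m) (comp (Suc m) m a1 a2) = gsrc K (Suc m) a1"
    using mult_bnd(1)[OF x mn] sig clab_src_eq[OF a1 a2] left_unit[OF _ bnd(1)] mn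
    by (simp add: comp_def)
  show "gtgt K (Suc m) (comp (Suc m) m a1 a2) = gtgt K (Suc m) a2"
    using mult_bnd(2)[OF x mn] sig clab_tgt_eq[OF a1 a2 mid] left_unit[OF _ bnd(2)] mn
    by (simp add: comp_def)
qed

lemma composable_bnd:
  assumes c: "composable (Suc m) p a1 a2" and p: "p < m"
  shows "composable m p (gsrc K (Suc m) a1) (gsrc K (Suc m) a2)"
    "composable m p (gtgt K (Suc m) a1) (gtgt K (Suc m) a2)"
proof -
  have a1: "a1 \<in> gcells K (Suc m)" and a2: "a2 \<in> gcells K (Suc m)"
    and cp: "itgt K (Suc m) (Suc (m - p)) a1 = isrc K (Suc m) (Suc (m - p)) a2"
    using c p unfolding composable_def by (auto simp: Suc_diff_le)
  have m2: "2 \<le> Suc m" and j: "1 \<le> m - p" using p by auto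
  note g1 = iter_bnd_src_tgt[OF a1 m2 j] and g2 = iter_bnd_src_tgt[OF a2 m2 j]
  show "composable m p (gsrc K (Suc m) a1) (gsrc K (Suc m) a2)"
    "composable m p (gtgt K (Suc m) a1) (gtgt K (Suc m) a2)"
    using cp g1 g2 bnd_cell[OF a1] bnd_cell[OF a2] p
    unfolding composable_def itgt_Suc_inner isrc_Suc_inner by simp_all
qed

lemma comp_iter_bnd:
  "composable m p a1 a2 \<Longrightarrow> isrc K m (m-p) (comp m p a1 a2) = isrc K m (m-p) a1 \<and>
                       itgt K m (m-p) (comp m p a1 a2) = itgt K m (m-p) a2"
proof (induction m arbitrary: a1 a2)
  case 0 then show ?case by (simp add: composable_def)
next
  case (Suc m)
  have p: "p < Suc m" using Suc.prems by (simp add: composable_def)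
  show ?case
  proof (cases "p = m")
    case True
    then show ?thesis using comp_bnd_eq[OF Suc.prems[unfolded True]] by simp
  next
    case False
    then have pl: "p < m" using p by simp
    have e: "Suc m - p = Suc (m - p)" using pl by simp
    show ?thesis unfolding e isrc_Suc_inner itgt_Suc_inner
      using comp_bnd_lt[OF Suc.prems pl] Suc.IH[OF composable_bnd(1)[OF Suc.prems pl]]
        Suc.IH[OF composable_bnd(2)[OF Suc.prems pl]] by simp
  qed
qed

end

section \<open>Contractible collections: degenerate and connecting cells\<close>

locale contractible = collection +
  fixes gam :: "nat \<Rightarrow> t1cell \<Rightarrow> 'a \<times> 'a \<Rightarrow> 'a"
  assumes con: "contraction n K k gam"
begin

lemma contr_cell:
  assumes mn: "Suc m \<le> n"
    and u: "u \<in> gcells K m" "shape m u = t" and v: "v \<in> gcells K m" "shape m v = t"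
    and par: "parallel K m u v"
  shows "gam (Suc m) (t, \<lambda>_. ()) (u, v) \<in> gcells K (Suc m) \<and>
         shape (Suc m) (gam (Suc m) (t, \<lambda>_. ()) (u, v)) = t \<and>
         gsrc K (Suc m) (gam (Suc m) (t, \<lambda>_. ()) (u, v)) = u \<and>
         gtgt K (Suc m) (gam (Suc m) (t, \<lambda>_. ()) (u, v)) = v"
proof -
  have ku: "k m u = (t, \<lambda>_. ())" "k m v = (t, \<lambda>_. ())" and ht: "hle m t"
    using k_shape u v by auto
  have al: "(t, \<lambda>_. ()) \<in> gcells (T1 n) m" using T1_cells[of m n] mn ht by auto
  have "(u, v) \<in> Cset n K k (Suc m) (tid (t, \<lambda>_. ()))"
    using u v ku par trunc_hle[OF ht]
    unfolding Cset_def tid_def fib_def parallel_def by (auto simp: T1_src T1_tgt)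
  then have "gam (Suc m) (t, \<lambda>_. ()) (u, v) \<in> fib K k (Suc m) (tid (t, \<lambda>_. ())) \<and>
      gsrc K (Suc m) (gam (Suc m) (t, \<lambda>_. ()) (u, v)) = u \<and>
      gtgt K (Suc m) (gam (Suc m) (t, \<lambda>_. ()) (u, v)) = v"
    using con al mn unfolding contraction_def by (metis diff_Suc_1 fst_conv le_add1 plus_1_eq_Suc snd_conv)
  then show ?thesis by (auto simp: fib_def tid_def shape_def)
qed

fun degen :: "nat \<Rightarrow> nat \<Rightarrow> 'a \<Rightarrow> 'a" where
  "degen i 0 a = a"
| "degen i (Suc j) a = gam (Suc (i + j)) (shape i a, \<lambda>_. ()) (degen i j a, degen i j a)"

lemma degen_props:
  assumes a: "a \<in> gcells K i" and ij: "i + j \<le> n"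
  shows "degen i j a \<in> gcells K (i + j) \<and> shape (i + j) (degen i j a) = shape i a \<and>
         isrc K (i + j) j (degen i j a) = a \<and> itgt K (i + j) j (degen i j a) = a"
  using ij
proof (induction j)
  case 0 then show ?case using a by simp
next
  case (Suc j)
  then have IH: "degen i j a \<in> gcells K (i + j)" "shape (i + j) (degen i j a) = shape i a"
     "isrc K (i + j) j (degen i j a) = a" "itgt K (i + j) j (degen i j a) = a" by auto
  have "degen i (Suc j) a \<in> gcells K (Suc (i + j)) \<and> shape (Suc (i + j)) (degen i (Suc j) a) = shape i a \<and>
        gsrc K (Suc (i + j)) (degen i (Suc j) a) = degen i j a \<and>
        gtgt K (Suc (i + j)) (degen i (Suc j) a) = degen i j a"
    using contr_cell[of "i + j" "degen i j a" "shape i a" "degen i j a"] Suc.prems IH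
    by (simp add: parallel_def)
  then show ?case using IH by (simp del: isrc.simps(2) itgt.simps(2) add: isrc_Suc_inner itgt_Suc_inner)
qed

text \<open>Parallel j-cells u, v of the same shape are joined by an m-cell (m > j) of that shape
  with j-dimensional source u and target v: a contraction cell, degenerated up to dimension m.\<close>
lemma connecting_cell:
  assumes mn: "m \<le> n" and j: "j < m"
    and u: "u \<in> gcells K j" and v: "v \<in> gcells K j" and sh: "shape j u = shape j v"
    and par: "parallel K j u v"
  shows "\<exists>w\<in>gcells K m. shape m w = shape j u \<and> isrc K m (m-j) w = u \<and> itgt K m (m-j) w = v"
proof -
  define h where "h = gam (Suc j) (shape j u, \<lambda>_. ()) (u, v)"
  have "Suc j \<le> n" using mn j by simp
  then have "h \<in> gcells K (Suc j) \<and> shape (Suc j) h = shape j u \<and> gsrc K (Suc j) h = u \<and> gtgt K (Suc j) h = v"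
    unfolding h_def by (rule contr_cell) (simp_all add: u v sh par)
  then have h: "h \<in> gcells K (Suc j)" "shape (Suc j) h = shape j u" "gsrc K (Suc j) h = u" "gtgt K (Suc j) h = v"
    by blast+
  define w where "w = degen (Suc j) (m - Suc j) h"
  have e: "Suc j + (m - Suc j) = m" "m - j = Suc (m - Suc j)" "m - (m - Suc j) = Suc j" using j by auto
  have w: "w \<in> gcells K m" "shape m w = shape j u"
    "isrc K m (m - Suc j) w = h" "itgt K m (m - Suc j) w = h"
    using degen_props[OF h(1), of "m - Suc j"] h(2) e(1) mn unfolding w_def by simp_all
  have "isrc K m (m-j) w = gsrc K (Suc j) (isrc K m (m - Suc j) w)"
    "itgt K m (m-j) w = gtgt K (Suc j) (itgt K m (m - Suc j) w)"
    unfolding e(2) by (simp_all add: e(3))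
  then have "isrc K m (m-j) w = u" "itgt K m (m-j) w = v"
    using w(3,4) h(3,4) by simp_all
  then show ?thesis using w by blast
qed

end

section \<open>Contractible operads with a system of compositions\<close>

locale contractible_operad = contractible n K k gam + composing_operad n K k eK mK sig
  for n K k gam eK mK sig
begin

text \<open>Changing the j-dimensional boundary of a cell c0 to a parallel one of the right shape
  without changing the shape: compose c0 along j with connecting cells on both sides; the
  shapes of these are identities for composition along j.\<close>
lemma adjust_top_bnd:
  assumes c0: "c0 \<in> gcells K m" and j: "j < m"
    and g: "g \<in> gcells K j" "shape j g = trunc j (shape m c0)"
    and h: "h \<in> gcells K j" "shape j h = trunc j (shape m c0)"
    and pg: "parallel K j g (isrc K m (m-j) c0)" and ph: "parallel K j (itgt K m (m-j) c0) h"
  shows "\<exists>c\<in>gcells K m. shape m c = shape m c0 \<and> isrc K m (m-j) c = g \<and> itgt K m (m-j) c = h"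
proof -
  define x where "x = shape m c0"
  have mn: "m \<le> n" using cell_dim[OF c0] .
  have mj: "m - (m - j) = j" using j by simp
  have s0: "isrc K m (m-j) c0 \<in> gcells K j" "shape j (isrc K m (m-j) c0) = trunc j x"
    and t0: "itgt K m (m-j) c0 \<in> gcells K j" "shape j (itgt K m (m-j) c0) = trunc j x"
    using iter_bnd_cell[OF c0, of "m-j"] shape_iter_bnd[OF c0, of "m-j"] mj by (auto simp: x_def)
  obtain w1 where w1: "w1 \<in> gcells K m" "shape m w1 = trunc j x"
    "isrc K m (m-j) w1 = g" "itgt K m (m-j) w1 = isrc K m (m-j) c0"
    using connecting_cell[OF mn j g(1) s0(1)] g(2) s0(2) pg by (auto simp: x_def)
  obtain w2 where w2: "w2 \<in> gcells K m" "shape m w2 = trunc j x"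
    "isrc K m (m-j) w2 = itgt K m (m-j) c0" "itgt K m (m-j) w2 = h"
    using connecting_cell[OF mn j t0(1) h(1)] h(2) t0(2) ph by (auto simp: x_def)
  define d where "d = comp m j c0 w2"
  have cd: "composable m j c0 w2" using c0 w2 j unfolding composable_def by simp
  have d: "d \<in> gcells K m" "shape m d = x"
    "isrc K m (m-j) d = isrc K m (m-j) c0" "itgt K m (m-j) d = h"
    using comp_cell[OF cd] comp_shape[OF cd] comp_iter_bnd[OF cd] w2 tcomp_trunc_right
    by (simp_all add: d_def x_def)
  have cc: "composable m j w1 d" using w1 d j unfolding composable_def by simp
  have "shape m (comp m j w1 d) = x"
    using comp_shape[OF cc] w1 d tcomp_trunc_left by simp
  then show ?thesis using comp_cell[OF cc] comp_iter_bnd[OF cc] w1 d by (auto simp: x_def)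
qed

text \<open>Any parallel pair of j-cells of the right shape can be made the j-dimensional boundary
  of a cell of a given shape; by induction on j, first adjusting the lower boundaries.\<close>
lemma adjust_bnd:
  assumes "c0 \<in> gcells K m" "j < m" "g \<in> gcells K j" "shape j g = trunc j (shape m c0)"
    "h \<in> gcells K j" "shape j h = trunc j (shape m c0)" "parallel K j g h"
  shows "\<exists>c\<in>gcells K m. shape m c = shape m c0 \<and> isrc K m (m-j) c = g \<and> itgt K m (m-j) c = h"
  using assms
proof (induction j arbitrary: g h)
  case 0
  then show ?case using adjust_top_bnd[of c0 m 0 g h] by (simp add: parallel_def)
next
  case (Suc j)
  note c0 = Suc.prems(1) and jm = Suc.prems(2) and g = Suc.prems(3,4) and h = Suc.prems(5,6)
    and gh = Suc.prems(7)
  define g' where "g' = gsrc K (Suc j) g"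
  define h' where "h' = gtgt K (Suc j) g"
  have mem: "g' \<in> gcells K j" "h' \<in> gcells K j" using bnd_cell[OF g(1)] by (auto simp: g'_def h'_def)
  have sh: "shape j g' = trunc j (shape m c0)" "shape j h' = trunc j (shape m c0)"
    using shape_bnd[OF g(1)] g(2) by (auto simp: g'_def h'_def trunc_trunc min_def)
  have par: "parallel K j g' h'"
    using glob_eqs[OF g(1)] by (cases j) (simp_all add: parallel_def g'_def h'_def)
  obtain c1 where c1: "c1 \<in> gcells K m" "shape m c1 = shape m c0"
    "isrc K m (m-j) c1 = g'" "itgt K m (m-j) c1 = h'"
    using Suc.IH[OF c0 _ mem(1) sh(1) mem(2) sh(2) par] jm by auto
  have jm': "j < m" using jm by simp
  note bnd = bnd_iter_bnd[OF c1(1) jm']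
  have pg: "parallel K (Suc j) g (isrc K m (m - Suc j) c1)"
    unfolding parallel_def using bnd c1 by (simp add: g'_def h'_def)
  have ph: "parallel K (Suc j) (itgt K m (m - Suc j) c1) h"
    using gh unfolding parallel_def using bnd c1 by (simp add: g'_def h'_def)
  show ?case using adjust_top_bnd[OF c1(1) jm g(1) _ h(1) _ pg ph] g h c1 by auto
qed

lemma unit_cell: "m \<le> n \<Longrightarrow> eK m () \<in> gcells K m \<and> shape m (eK m ()) = globe m"
proof -
  assume m: "m \<le> n"
  have "k m (eK m ()) = (globe m, \<lambda>_. ())" using op m by (simp add: operad_def etaT_one)
  moreover have "eK m () \<in> gcells K m" using op m unfolding operad_def gmap_def by (auto simp: one_def)
  ultimately show ?thesis by (simp add: shape_def)
qed

lemma shape_surj: "m \<le> n \<Longrightarrow> hle m x \<Longrightarrow> \<exists>c\<in>gcells K m. shape m c = x"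
proof (induction x rule: measure_induct_rule[where f=size])
  case (less x)
  obtain d ts where x: "x = susp d (PT ts)" and l: "length ts \<noteq> 1" using susp_decomp by blast
  have dm: "d \<le> m" and hts: "hle (m - d) (PT ts)" using less.prems(2) unfolding x hle_susp by auto
  show ?case
  proof (cases ts)
    case Nil
    then have xg: "x = globe d" using x globe_susp by simp
    have "d + (m - d) = m" using dm by simp
    then show ?thesis using degen_props[of "eK d ()" d "m - d"] unit_cell[of d] dm less.prems(1) xg
      by auto
  next
    case (Cons t rest)
    with l obtain u us where ts: "ts = t # u # us" by (cases rest) auto
    from hts ts obtain m1 where m1: "m - d = Suc m1" by (cases "m - d") auto
    have dlt: "d < m" using m1 by simp
    define x1 where "x1 = susp d (PT [t])"
    define x2 where "x2 = susp d (PT (u # us))"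
    have h: "hle m x1" "hle m x2" using hts dm m1 ts by (auto simp: x1_def x2_def hle_susp)
    have s: "size x1 < size x" "size x2 < size x"
      using size_susp_split by (auto simp: x x1_def x2_def ts)
    obtain a1 where a1: "a1 \<in> gcells K m" "shape m a1 = x1" using less.IH[OF s(1) less.prems(1) h(1)] by blast
    obtain a2 where a2: "a2 \<in> gcells K m" "shape m a2 = x2" using less.IH[OF s(2) less.prems(1) h(2)] by blast
    have tr: "trunc d x1 = globe d" "trunc d x2 = globe d"
      by (simp_all add: x1_def x2_def trunc_susp globe_susp)
    have md: "m - (m - d) = d" using dm by simp
    have g: "itgt K m (m-d) a1 \<in> gcells K d" "shape d (itgt K m (m-d) a1) = trunc d (shape m a2)"
      using iter_bnd_cell[OF a1(1), of "m-d"] shape_iter_bnd[OF a1(1), of "m-d"] md a1(2) a2(2) tr by auto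
    obtain a2' where a2': "a2' \<in> gcells K m" "shape m a2' = x2" "isrc K m (m-d) a2' = itgt K m (m-d) a1"
      using adjust_bnd[OF a2(1) dlt g(1) g(2) g(1) g(2)] a2(2) by (auto simp: parallel_def)
    have cc: "composable m d a1 a2'" using a1 a2' dlt unfolding composable_def by simp
    have "shape m (comp m d a1 a2') = x"
      using comp_shape[OF cc] a1 a2' by (simp add: x1_def x2_def tcomp_susp x ts)
    then show ?thesis using comp_cell[OF cc] by blast
  qed
qed

primrec sec :: "nat \<Rightarrow> t1cell \<Rightarrow> 'a" where
  "sec 0 x = (SOME a. a \<in> gcells K 0 \<and> k 0 a = x)"
| "sec (Suc m) x = (SOME a. a \<in> gcells K (Suc m) \<and> k (Suc m) a = x \<and>
      gsrc K (Suc m) a = sec m (gsrc (T1 n) (Suc m) x) \<and> gtgt K (Suc m) a = sec m (gtgt (T1 n) (Suc m) x))"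

text \<open>The choices in sec are possible: a preimage of the right shape exists by surjectivity
  on shapes, and its boundary can then be adjusted to the previously chosen cells.\<close>
lemma sec_spec:
  "m \<le> n \<Longrightarrow> x \<in> gcells (T1 n) m \<Longrightarrow> sec m x \<in> gcells K m \<and> k m (sec m x) = x \<and>
     (0 < m \<longrightarrow> gsrc K m (sec m x) = sec (m-1) (gsrc (T1 n) m x) \<and>
                 gtgt K m (sec m x) = sec (m-1) (gtgt (T1 n) m x))"
proof (induction m arbitrary: x)
  case 0
  then obtain t where x: "x = (t, \<lambda>_. ())" "hle 0 t" using T1_cells by auto
  then obtain c where "c \<in> gcells K 0" "k 0 c = x" using shape_surj[of 0 t] k_shape by fastforce
  then have "\<exists>a. a \<in> gcells K 0 \<and> k 0 a = x" by blast
  from someI_ex[OF this] show ?case by simp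
next
  case (Suc m)
  then obtain t where x: "x = (t, \<lambda>_. ())" "hle (Suc m) t" using T1_cells by auto
  define y where "y = (trunc m t, (\<lambda>_. ()) :: nat list \<Rightarrow> unit)"
  have bnd_x: "gsrc (T1 n) (Suc m) x = y" "gtgt (T1 n) (Suc m) x = y"
    by (simp_all add: y_def T1_src T1_tgt x)
  have "y \<in> gcells (T1 n) m" using T1_cells[of m n] Suc.prems hle_trunc by (auto simp: y_def)
  then have u: "sec m y \<in> gcells K m" "shape m (sec m y) = trunc m t"
    using Suc.IH Suc.prems by (auto simp: shape_def y_def)
  obtain c0 where c0: "c0 \<in> gcells K (Suc m)" "shape (Suc m) c0 = t"
    using shape_surj[of "Suc m" t] x Suc.prems by auto
  obtain c where c: "c \<in> gcells K (Suc m)" "shape (Suc m) c = t"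
    "gsrc K (Suc m) c = sec m y" "gtgt K (Suc m) c = sec m y"
    using adjust_bnd[of c0 "Suc m" m "sec m y" "sec m y"] c0 u by (auto simp: parallel_def)
  then have "\<exists>a. a \<in> gcells K (Suc m) \<and> k (Suc m) a = x \<and>
      gsrc K (Suc m) a = sec m (gsrc (T1 n) (Suc m) x) \<and> gtgt K (Suc m) a = sec m (gtgt (T1 n) (Suc m) x)"
    using k_shape[OF c(1)] x bnd_x by auto
  from someI_ex[OF this] show ?case by simp
qed

lemma sec_map: "gmap n (T1 n) K sec"
  unfolding gmap_def using sec_spec by auto

lemma sec_k: "m \<le> n \<Longrightarrow> x \<in> gcells (T1 n) m \<Longrightarrow> k m (sec m x) = x"
  using sec_spec by blast

lemma k_surj: "m \<le> n \<Longrightarrow> k m ` gcells K m = gcells (T1 n) m"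
  using kmap sec_spec unfolding gmap_def by (auto intro!: image_eqI[of _ "k m"])

end

theorem mainTheorem6:
  fixes n :: nat
    and K :: "'a gset"
    and k :: "nat \<Rightarrow> 'a \<Rightarrow> t1cell"
    and eK :: "nat \<Rightarrow> unit \<Rightarrow> 'a"
    and mK :: "nat \<Rightarrow> 'a \<times> 'a tcell \<Rightarrow> 'a"
    and gam :: "nat \<Rightarrow> t1cell \<Rightarrow> 'a \<times> 'a \<Rightarrow> 'a"
    and sig :: "nat \<Rightarrow> t1cell \<Rightarrow> 'a"
  assumes "operad n K k eK mK"
    and "contraction n K k gam"
    and "comp_system n K k eK sig"
  shows "(\<exists>kh. gmap n (T1 n) K kh \<and> (\<forall>m\<le>n. \<forall>x\<in>gcells (T1 n) m. k m (kh m x) = x))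
         \<and> (\<forall>m\<le>n. k m ` gcells K m = gcells (T1 n) m)"
proof -
  have "is_gset n K" and "gmap n K (T1 n) k"
    using assms(1) by (simp_all add: operad_def)
  then interpret contractible_operad n K k gam eK mK sig
    using assms by unfold_locales
  show ?thesis using sec_map sec_k k_surj by blast
qed

end
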